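(* Let $U$ be a finite word over the alphabet $\{\mathtt{a},\mathtt{b},\mathtt{x}\}$ starting and ending with the letter $\mathtt{x}$, and let $\alpha=r(U)^{1/(|U|+5)}$. Then there exists a constant $c>0$ such that $f_4(n)\geqslant c\,\alpha^n$ for all $n\in\mathbb{N}$.
   Context: A square is a finite non-empty word of the form $XX$; a word is square-free if it has no square factor. A square reduction replaces a word $UXXV$ (with $X$ non-empty) by $UXV$. A reduct of $W$ is any square-free word obtainable from $W$ by a finite sequence of square reductions, and $r(W)$ is the number of distinct reducts of $W$. $|U|$ is the length of $U$. For integers $k,n\geqslant 1$, $f_k(n)$ is the maximum of $r(W)$ over all words $W$ of length $n$ over a $k$-letter alphabet. *)

theory Defs
  imports Complex_Main
begin

text \<open>Words are lists. A k-letter alphabet is modelled as the letters 0..<k (nat);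
  all notions below are invariant under renaming letters.\<close>

definition square_free :: "'a list \<Rightarrow> bool" where
  "square_free w \<longleftrightarrow> \<not> (\<exists>u x v. x \<noteq> [] \<and> w = u @ x @ x @ v)"

definition square_reduction :: "'a list \<Rightarrow> 'a list \<Rightarrow> bool" where
  "square_reduction W W' \<longleftrightarrow> (\<exists>u x v. x \<noteq> [] \<and> W = u @ x @ x @ v \<and> W' = u @ x @ v)"

definition reducts :: "'a list \<Rightarrow> 'a list set" where
  "reducts W = {W'. square_reduction\<^sup>*\<^sup>* W W' \<and> square_free W'}"

definition r :: "'a list \<Rightarrow> nat" where
  "r W = card (reducts W)"

definition f :: "nat \<Rightarrow> nat \<Rightarrow> nat" where
  "f k n = Max {r W | W :: nat list. length W = n \<and> set W \<subseteq> {0..<k}}"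

end

theory Submission
  imports Defs "HOL-Library.Sublist"
begin

text \<open>Letters \<open>0, 1, 2, 3\<close> play the roles of \<open>a, b, x\<close> and a fourth letter \<open>y\<close>.
  Take a square-free word \<open>T\<^sub>1 \<dots> T\<^sub>N\<close> over the four codes \<open>aba, bab, axb, bxa\<close> and put
  \<open>W = V\<^sub>1 y T\<^sub>1 y V\<^sub>2 y T\<^sub>2 y \<dots>\<close>, where the blocks \<open>V\<^sub>i\<close> are \<open>m\<close> copies of \<open>U\<close> followed by
  short square-free padding blocks.  Replacing every copy of \<open>U\<close> by one of its reducts is a
  sequence of square reductions, and the result is square-free: a square avoiding \<open>y\<close> lies
  inside one token, while a square through \<open>y\<close> would force a square in \<open>T\<^sub>1 \<dots> T\<^sub>N\<close>, because
  blocks and codes alternate, are told apart by their first and by their last letter, and a code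
  is determined by its first two and by its last two letters.  Hence \<open>r W \<ge> r U ^ m\<close> with
  \<open>|W| = m (|U| + 5) + O(1)\<close>, and \<open>f\<^sub>4(n) \<ge> r(U)^(n/(|U|+5) - 16)\<close>.\<close>

section \<open>Squares and square reductions\<close>

lemma square_free_iff_sublist: "square_free w \<longleftrightarrow> (\<nexists>x. x \<noteq> [] \<and> sublist (x @ x) w)"
  unfolding square_free_def sublist_def by auto

lemma square_free_sublist: "square_free w \<Longrightarrow> sublist v w \<Longrightarrow> square_free v"
  unfolding square_free_iff_sublist using sublist_order.order_trans by blast

lemma square_free_iff_take_drop:
  "square_free w \<longleftrightarrow> (\<forall>i \<in> {0..<length w}. \<forall>l \<in> {1..length w}.
     i + 2 * l \<le> length w \<longrightarrow> take l (drop i w) \<noteq> take l (drop (i + l) w))"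
proof
  assume sf: "square_free w"
  show "\<forall>i \<in> {0..<length w}. \<forall>l \<in> {1..length w}.
     i + 2 * l \<le> length w \<longrightarrow> take l (drop i w) \<noteq> take l (drop (i + l) w)"
  proof (intro ballI impI notI)
    fix i l assume "l \<in> {1..length w}" and len: "i + 2 * l \<le> length w"
      and eq: "take l (drop i w) = take l (drop (i + l) w)"
    have "w = take i w @ take l (drop i w) @ take l (drop (i + l) w) @ drop (i + 2 * l) w"
      using len by (metis add.assoc append_take_drop_id drop_drop mult_2 add.commute)
    moreover have "take l (drop i w) \<noteq> []" using \<open>l \<in> {1..length w}\<close> len by simp
    ultimately show False using sf eq unfolding square_free_def by metis
  qed
next
  assume no_rep: "\<forall>i \<in> {0..<length w}. \<forall>l \<in> {1..length w}.
     i + 2 * l \<le> length w \<longrightarrow> take l (drop i w) \<noteq> take l (drop (i + l) w)"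
  show "square_free w" unfolding square_free_def
  proof
    assume "\<exists>u x v. x \<noteq> [] \<and> w = u @ x @ x @ v"
    then obtain u x v where "x \<noteq> []" "w = u @ x @ x @ v" by blast
    then show False using no_rep[rule_format, of "length u" "length x"] by (auto simp: Suc_le_eq)
  qed
qed

lemma square_reduction_step:
  assumes "square_reduction W W'"
  shows "length W' < length W \<and> set W' \<subseteq> set W \<and> W' \<noteq> [] \<and> hd W' = hd W \<and> last W' = last W"
proof -
  obtain u x v where "x \<noteq> []" "W = u @ x @ x @ v" "W' = u @ x @ v"
    using assms unfolding square_reduction_def by blast
  then show ?thesis by (cases u; cases v) auto
qed

lemma rtranclp_square_reduction_length_set:
  "square_reduction\<^sup>*\<^sup>* W W' \<Longrightarrow> length W' \<le> length W \<and> set W' \<subseteq> set W"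
  by (induction rule: rtranclp_induct) (use square_reduction_step in fastforce)+

lemma rtranclp_square_reduction_ends:
  "square_reduction\<^sup>*\<^sup>* W W' \<Longrightarrow> W \<noteq> [] \<Longrightarrow> W' \<noteq> [] \<and> hd W' = hd W \<and> last W' = last W"
  by (induction rule: rtranclp_induct) (use square_reduction_step in fastforce)+

lemma rtranclp_square_reduction_context:
  "square_reduction\<^sup>*\<^sup>* a b \<Longrightarrow> square_reduction\<^sup>*\<^sup>* (p @ a @ q) (p @ b @ q)"
proof (induction rule: rtranclp_induct)
  case (step b c)
  obtain u x v where "x \<noteq> []" "b = u @ x @ x @ v" "c = u @ x @ v"
    using step.hyps(2) unfolding square_reduction_def by blast
  then have "square_reduction (p @ b @ q) (p @ c @ q)"
    unfolding square_reduction_def by (metis append.assoc)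
  with step.IH show ?case by (rule rtranclp.rtrancl_into_rtrancl)
qed simp

lemma exists_reduct: "\<exists>W'. square_reduction\<^sup>*\<^sup>* W W' \<and> square_free W'"
proof (induction "length W" arbitrary: W rule: less_induct)
  case less
  show ?case
  proof (cases "square_free W")
    case False
    then obtain u x v where "x \<noteq> []" "W = u @ x @ x @ v" unfolding square_free_def by blast
    then have step: "square_reduction W (u @ x @ v)" and "length (u @ x @ v) < length W"
      unfolding square_reduction_def by auto
    with less obtain W' where "square_reduction\<^sup>*\<^sup>* (u @ x @ v) W'" "square_free W'" by blast
    with step show ?thesis by (meson converse_rtranclp_into_rtranclp)
  qed blast
qed

lemma finite_reducts: "finite (reducts W)"
proof (rule finite_subset)
  show "reducts W \<subseteq> {w. set w \<subseteq> set W \<and> length w \<le> length W}"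
    unfolding reducts_def using rtranclp_square_reduction_length_set by blast
qed (rule finite_lists_length_le, simp)

lemma r_pos: "1 \<le> r W"
  using exists_reduct[of W] finite_reducts[of W]
  unfolding r_def reducts_def by (simp add: Suc_le_eq card_gt_0_iff)

lemma r_le_f:
  assumes "length W = n" "set W \<subseteq> {0..<k}"
  shows "r W \<le> f k n"
proof -
  have "{r W | W :: nat list. length W = n \<and> set W \<subseteq> {0..<k}} =
      r ` {W. set W \<subseteq> {0..<k} \<and> length W = n}"
    by blast
  then have "finite {r W | W :: nat list. length W = n \<and> set W \<subseteq> {0..<k}}"
    using finite_lists_length_eq[of "{0..<k}" n] by simp
  then show ?thesis unfolding f_def using assms by (intro Max_ge) blast+
qed

section \<open>Square-free words over four letters\<close>

definition square_free_words :: "'a set \<Rightarrow> nat \<Rightarrow> 'a list set" where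
  "square_free_words A n = {w. set w \<subseteq> A \<and> length w = n \<and> square_free w}"

lemma finite_square_free_words: "finite A \<Longrightarrow> finite (square_free_words A n)"
  unfolding square_free_words_def by (rule finite_subset[OF _ finite_lists_length_eq[of A n]]) auto

text \<open>A square created by appending a letter to a square-free word of length \<open>n\<close> is a suffix
  \<open>X X\<close>, so the extended word is determined by its square-free prefix \<open>u X\<close> of some length
  \<open>i \<le> n\<close>.\<close>

lemma snoc_not_square_free:
  assumes w: "w \<in> square_free_words A n" and "\<not> square_free (w @ [c])"
  shows "w @ [c] \<in> (\<Union>i\<le>n. (\<lambda>z. z @ drop (2 * i - Suc n) z) ` square_free_words A i)"
proof -
  obtain u X v where "X \<noteq> []" and sq: "w @ [c] = u @ X @ X @ v"
    using assms(2) unfolding square_free_def by blast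
  have "v = []"
  proof (rule ccontr)
    assume "v \<noteq> []"
    then have "w = u @ X @ X @ butlast v"
      using sq by (metis butlast_append butlast_snoc append_is_Nil_conv)
    with w \<open>X \<noteq> []\<close> show False unfolding square_free_words_def square_free_def by blast
  qed
  with sq \<open>X \<noteq> []\<close> have "w @ [c] = (u @ X @ butlast X) @ [last X]"
    by (metis append_assoc append_butlast_last_id append_Nil2)
  then have w_eq: "w = (u @ X) @ butlast X" by simp
  define i where "i = length u + length X"
  have len: "Suc n = length u + 2 * length X"
    using w w_eq \<open>X \<noteq> []\<close> unfolding square_free_words_def by (cases X) auto
  then have "i \<le> n" using \<open>X \<noteq> []\<close> unfolding i_def by (cases X) auto
  have "sublist (u @ X) w" unfolding w_eq sublist_def by blast
  with w have "square_free (u @ X)"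
    unfolding square_free_words_def using square_free_sublist by blast
  then have "u @ X \<in> square_free_words A i"
    using w w_eq unfolding square_free_words_def i_def by auto
  moreover have "w @ [c] = (u @ X) @ drop (2 * i - Suc n) (u @ X)"
    using sq \<open>v = []\<close> len unfolding i_def by simp
  ultimately show ?thesis using \<open>i \<le> n\<close> by blast
qed

lemma card_square_free_words_Suc:
  assumes "finite A"
  shows "card A * card (square_free_words A n) \<le>
           card (square_free_words A (Suc n)) + (\<Sum>i\<le>n. card (square_free_words A i))"
proof -
  define bad where "bad = (\<Union>i\<le>n. (\<lambda>z. z @ drop (2 * i - Suc n) z) ` square_free_words A i)"
  have "inj_on (\<lambda>(w, c). w @ [c]) (square_free_words A n \<times> A)"
    by (auto simp: inj_on_def)
  then have "card A * card (square_free_words A n) =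
      card ((\<lambda>(w, c). w @ [c]) ` (square_free_words A n \<times> A))"
    by (simp add: card_image card_cartesian_product)
  also have "\<dots> \<le> card (square_free_words A (Suc n) \<union> bad)"
  proof (rule card_mono)
    show "finite (square_free_words A (Suc n) \<union> bad)"
      unfolding bad_def using finite_square_free_words[OF assms] by blast
    show "(\<lambda>(w, c). w @ [c]) ` (square_free_words A n \<times> A) \<subseteq> square_free_words A (Suc n) \<union> bad"
      using snoc_not_square_free unfolding bad_def by (fastforce simp: square_free_words_def)
  qed
  also have "\<dots> \<le> card (square_free_words A (Suc n)) + card bad" by (rule card_Un_le)
  also have "card bad \<le> (\<Sum>i\<le>n. card ((\<lambda>z. z @ drop (2 * i - Suc n) z) ` square_free_words A i))"
    unfolding bad_def by (rule card_UN_le) simp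
  also have "\<dots> \<le> (\<Sum>i\<le>n. card (square_free_words A i))"
    by (intro sum_mono card_image_le finite_square_free_words assms)
  finally show ?thesis by simp
qed

lemma sum_atMost_le_double:
  fixes c :: "nat \<Rightarrow> nat"
  assumes "\<And>k. k \<le> n \<Longrightarrow> c k * 2 ^ (n - k) \<le> c n"
  shows "(\<Sum>i\<le>n. c i) \<le> 2 * c n"
proof -
  have "(\<Sum>i\<le>n. c i) * 2 ^ n = (\<Sum>i\<le>n. c i * 2 ^ (n - i) * 2 ^ i)"
    unfolding sum_distrib_right by (intro sum.cong refl) (simp add: mult.assoc power_add[symmetric])
  also have "\<dots> \<le> (\<Sum>i\<le>n. c n * 2 ^ i)"
    using assms by (intro sum_mono mult_right_mono) auto
  also have "\<dots> = c n * (\<Sum>i<Suc n. 2 ^ i)" by (simp add: sum_distrib_left lessThan_Suc_atMost)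
  also have "\<dots> = c n * (2 ^ Suc n - 1)" by (simp only: lessThan_atLeast0 sum_power2)
  also have "\<dots> \<le> 2 * c n * 2 ^ n" by simp
  finally show ?thesis by simp
qed

lemma card_square_free_words_growth:
  assumes "finite A" "4 \<le> card A" "k \<le> n"
  shows "card (square_free_words A k) * 2 ^ (n - k) \<le> card (square_free_words A n)"
  using assms(3)
proof (induction n arbitrary: k)
  case (Suc n)
  have "4 * card (square_free_words A n) \<le> card A * card (square_free_words A n)"
    using assms(2) by simp
  also have "\<dots> \<le> card (square_free_words A (Suc n)) + 2 * card (square_free_words A n)"
    using card_square_free_words_Suc[OF assms(1), of n] Suc.IH
      sum_atMost_le_double[of n "card \<circ> square_free_words A"]
    by fastforce
  finally have double: "2 * card (square_free_words A n) \<le> card (square_free_words A (Suc n))"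
    by simp
  show ?case
  proof (cases "k = Suc n")
    case False
    with Suc.prems have "card (square_free_words A k) * 2 ^ (Suc n - k) =
        2 * (card (square_free_words A k) * 2 ^ (n - k))"
      by (simp add: Suc_diff_le)
    also have "\<dots> \<le> 2 * card (square_free_words A n)" using Suc.IH Suc.prems False by simp
    finally show ?thesis using double by simp
  qed simp
qed simp

lemma square_free_word_exists:
  assumes "finite A" "4 \<le> card A"
  shows "\<exists>w. set w \<subseteq> A \<and> length w = n \<and> square_free w"
proof -
  have "square_free_words A 0 = {[]}" unfolding square_free_words_def square_free_def by auto
  then have "2 ^ n \<le> card (square_free_words A n)"
    using card_square_free_words_growth[OF assms, of 0 n] by simp
  then have "square_free_words A n \<noteq> {}"
    by (metis card.empty le_zero_eq power_not_zero zero_neq_numeral)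
  then show ?thesis unfolding square_free_words_def by auto
qed

section \<open>Words joined by a separator\<close>

definition join_sep :: "'a \<Rightarrow> 'a list list \<Rightarrow> 'a list" where
  "join_sep y ts = concat (map (\<lambda>t. t @ [y]) ts)"

lemma join_sep_simps [simp]:
  "join_sep y [] = []"
  "join_sep y (t # ts) = t @ y # join_sep y ts"
  "join_sep y (ts @ ts') = join_sep y ts @ join_sep y ts'"
  unfolding join_sep_def by simp_all

lemma length_join_sep: "length (join_sep y ts) = sum_list (map length ts) + length ts"
  by (induction ts) auto

lemma set_join_sep: "set (join_sep y ts) \<subseteq> insert y (set (concat ts))"
  by (induction ts) auto

lemma join_sep_eq_Nil_iff [simp]: "join_sep y ts = [] \<longleftrightarrow> ts = []"
  by (cases ts) auto

lemma last_join_sep: "ts \<noteq> [] \<Longrightarrow> last (join_sep y ts) = y"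
  by (induction ts) auto

lemma append_sep_eq_append_sep:
  "y \<notin> set t \<Longrightarrow> y \<notin> set g \<Longrightarrow> t @ y # R = g @ y # S \<Longrightarrow> t = g \<and> R = S"
  by (induction t arbitrary: g) (auto simp: Cons_eq_append_conv)

lemma append_sep_eq_append_sep_cases:
  "y \<notin> set t \<Longrightarrow> t @ y # J = Z @ y # R \<Longrightarrow> Z = t \<and> R = J \<or> (\<exists>Z'. Z = t @ y # Z' \<and> J = Z' @ y # R)"
  by (induction t arbitrary: Z) (auto simp: Cons_eq_append_conv)

lemma join_sep_split_at_sep:
  "y \<notin> set (concat ts) \<Longrightarrow> join_sep y ts = Z @ y # R \<Longrightarrow>
   \<exists>pre post. ts = pre @ post \<and> join_sep y pre = Z @ [y] \<and> join_sep y post = R"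
proof (induction ts arbitrary: Z)
  case (Cons t ts)
  then have "Z = t \<and> R = join_sep y ts \<or> (\<exists>Z'. Z = t @ y # Z' \<and> join_sep y ts = Z' @ y # R)"
    by (intro append_sep_eq_append_sep_cases) auto
  then show ?case
  proof (elim disjE exE conjE)
    fix Z' assume "Z = t @ y # Z'" "join_sep y ts = Z' @ y # R"
    with Cons obtain pre post
      where "ts = pre @ post" "join_sep y pre = Z' @ [y]" "join_sep y post = R"
      by auto
    with \<open>Z = t @ y # Z'\<close>
    have "t # ts = (t # pre) @ post \<and> join_sep y (t # pre) = Z @ [y] \<and> join_sep y post = R"
      by simp
    then show ?thesis by blast
  qed (rule exI[of _ "[t]"], auto)
qed simp

lemma join_sep_append_cancel:
  "y \<notin> set (concat ts) \<Longrightarrow> y \<notin> set (concat G) \<Longrightarrow> join_sep y ts = join_sep y G @ R \<Longrightarrow>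
   \<exists>rest. ts = G @ rest \<and> join_sep y rest = R"
proof (induction G arbitrary: ts)
  case (Cons g G)
  from Cons.prems(3) obtain t ts' where ts: "ts = t # ts'" by (cases ts) auto
  with Cons.prems(3) have "t @ y # join_sep y ts' = g @ y # (join_sep y G @ R)" by simp
  moreover have "y \<notin> set t" "y \<notin> set g" using Cons.prems(1,2) ts by auto
  ultimately have "t = g" and "join_sep y ts' = join_sep y G @ R"
    using append_sep_eq_append_sep by metis+
  moreover have "y \<notin> set (concat ts')" "y \<notin> set (concat G)" using Cons.prems(1,2) ts by auto
  ultimately obtain rest where "ts' = G @ rest" "join_sep y rest = R" using Cons.IH by blast
  with ts \<open>t = g\<close> show ?case by simp
qed simp

lemma inj_on_join_sep: "inj_on (join_sep y) {ts. y \<notin> set (concat ts)}"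
proof (rule inj_onI)
  fix ts ts' assume "ts \<in> {ts. y \<notin> set (concat ts)}" "ts' \<in> {ts. y \<notin> set (concat ts)}"
    and "join_sep y ts = join_sep y ts'"
  then obtain rest where "ts = ts' @ rest" "join_sep y rest = []"
    using join_sep_append_cancel[of y ts ts' "[]"] by auto
  then show "ts = ts'" by (cases rest) auto
qed

lemma suffix_join_sep:
  assumes "y \<notin> set A" "suffix (A @ [y]) (join_sep y ts)"
  shows "ts \<noteq> [] \<and> suffix A (last ts)"
proof -
  have "ts \<noteq> []" using assms(2) by (auto simp: suffix_def)
  then obtain K t where ts: "ts = K @ [t]" by (metis append_butlast_last_id)
  then have "join_sep y ts = (join_sep y K @ t) @ [y]" by simp
  with assms(2) have "suffix A (join_sep y K @ t)" by (metis snoc_suffix_snoc)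
  then have "suffix A t \<or> (\<exists>A'. A = A' @ t \<and> suffix A' (join_sep y K))"
    by (simp only: suffix_append)
  then have "suffix A t"
  proof (elim disjE exE conjE)
    fix A' assume A: "A = A' @ t" and "suffix A' (join_sep y K)"
    show "suffix A t"
    proof (cases "A' = []")
      case False
      with \<open>suffix A' (join_sep y K)\<close> have "K \<noteq> []" "last A' = last (join_sep y K)"
        by (auto simp: suffix_def)
      then have "last A' = y" by (simp add: last_join_sep)
      with False A assms(1) show ?thesis by (metis Un_iff last_in_set set_append)
    qed (simp add: A)
  qed
  with \<open>ts \<noteq> []\<close> ts show ?thesis by simp
qed

lemma prefix_join_sep:
  assumes "y \<notin> set C" "C \<noteq> []" "prefix C (join_sep y ts)"
  shows "ts \<noteq> [] \<and> prefix C (hd ts)"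
proof -
  obtain t ts' where ts: "ts = t # ts'" using assms(2,3) by (cases ts) auto
  then have "prefix C (t @ y # join_sep y ts')" using assms(3) by simp
  then have "prefix C t"
    unfolding prefix_append using assms(1) by (auto simp: prefix_Cons)
  with ts show ?thesis by simp
qed

lemma sublist_join_sep:
  "y \<notin> set Y \<Longrightarrow> Y \<noteq> [] \<Longrightarrow> sublist Y (join_sep y ts) \<Longrightarrow> \<exists>t\<in>set ts. sublist Y t"
proof (induction ts)
  case (Cons t ts)
  have no_prefix: "\<not> prefix Z (y # J)" if "Z \<noteq> []" "set Z \<subseteq> set Y" for Z J
    using that Cons.prems(1) by (cases Z) (auto simp: prefix_Cons)
  from Cons.prems(3) consider "sublist Y t" | "sublist Y (y # join_sep y ts)"
    | Y1 Y2 where "Y = Y1 @ Y2" "suffix Y1 t" "prefix Y2 (y # join_sep y ts)"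
    unfolding join_sep_simps sublist_append by blast
  then show ?case
  proof cases
    case 2
    with no_prefix Cons.prems(2) have "sublist Y (join_sep y ts)"
      unfolding sublist_Cons_right by blast
    with Cons.IH Cons.prems(1,2) show ?thesis by auto
  next
    case 3
    with no_prefix[of Y2] have "Y2 = []" by auto
    with 3 show ?thesis by (auto intro: suffix_imp_sublist)
  qed simp
qed simp

text \<open>Write \<open>X = A y B\<close> with \<open>y \<notin> A\<close>.  In \<open>u X X v\<close> the first \<open>y\<close> ends a token ending in \<open>A\<close>;
  the factor \<open>B A y\<close> consists of whole tokens \<open>G\<close> followed by a token \<open>C A\<close>; and the second
  copy of \<open>B\<close> is \<open>G\<close> again followed by the beginning \<open>C\<close> of the next token.\<close>

lemma square_across_sep:
  assumes sep_free: "y \<notin> set (concat ts)"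
    and sq: "join_sep y ts = u @ X @ X @ v" and "y \<in> set X"
  shows "\<exists>pre G C A rest. ts = pre @ G @ [C @ A] @ G @ rest \<and> pre \<noteq> [] \<and> suffix A (last pre)
           \<and> (C \<noteq> [] \<longrightarrow> rest \<noteq> [] \<and> prefix C (hd rest))"
proof -
  obtain A B where X: "X = A @ y # B" and "y \<notin> set A"
    using \<open>y \<in> set X\<close> by (metis split_list_first)
  have "join_sep y ts = (u @ A) @ y # ((B @ A) @ y # B @ v)" using sq X by simp
  then obtain pre post where ts: "ts = pre @ post" and jpre: "join_sep y pre = (u @ A) @ [y]"
    and jpost: "join_sep y post = (B @ A) @ y # B @ v"
    using join_sep_split_at_sep[OF sep_free] by blast
  have sep_free_pre: "y \<notin> set (concat pre)" and sep_free_post: "y \<notin> set (concat post)"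
    using sep_free ts by auto
  have "suffix (A @ [y]) (join_sep y pre)" unfolding jpre suffix_def by (rule exI[of _ u]) simp
  then have pre: "pre \<noteq> [] \<and> suffix A (last pre)"
    by (rule suffix_join_sep[OF \<open>y \<notin> set A\<close>])
  obtain mid post2 where post: "post = mid @ post2" and jmid: "join_sep y mid = (B @ A) @ [y]"
    and jpost2: "join_sep y post2 = B @ v"
    using join_sep_split_at_sep[OF sep_free_post jpost] by blast
  have sep_free_mid: "y \<notin> set (concat mid)" and sep_free_post2: "y \<notin> set (concat post2)"
    using sep_free_post post by auto
  have "suffix (A @ [y]) (join_sep y mid)" unfolding jmid suffix_def by (rule exI[of _ B]) simp
  then have "mid \<noteq> [] \<and> suffix A (last mid)"
    by (rule suffix_join_sep[OF \<open>y \<notin> set A\<close>])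
  then obtain G C where mid: "mid = G @ [C @ A]"
    by (metis append_butlast_last_id suffix_def)
  with jmid jpost2 have "join_sep y post2 = join_sep y G @ C @ v" by simp
  moreover have "y \<notin> set (concat G)" using sep_free_mid mid by simp
  ultimately obtain rest where post2: "post2 = G @ rest" and jrest: "join_sep y rest = C @ v"
    using join_sep_append_cancel[OF sep_free_post2] by blast
  have "y \<notin> set C" using sep_free_mid mid by auto
  then have "C \<noteq> [] \<longrightarrow> rest \<noteq> [] \<and> prefix C (hd rest)"
    using prefix_join_sep[of y C rest] jrest by auto
  moreover have "ts = pre @ G @ [C @ A] @ G @ rest" using ts post mid post2 by simp
  ultimately show ?thesis using pre by blast
qed

section \<open>Blocks and codes\<close>

text \<open>The codes begin and end with \<open>a\<close> or \<open>b\<close>, blocks with \<open>x\<close>; distinct codes differ both in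
  their first two and in their last two letters.\<close>

definition codes :: "nat list set" where
  "codes = {[0, 1, 0], [1, 0, 1], [0, 2, 1], [1, 2, 0]}"

definition is_block :: "nat list \<Rightarrow> bool" where
  "is_block t \<longleftrightarrow> t \<noteq> [] \<and> hd t = 2 \<and> last t = 2 \<and> set t \<subseteq> {0, 1, 2} \<and> square_free t"

lemma square_free_three: "square_free [a, b, c] \<longleftrightarrow> a \<noteq> b \<and> b \<noteq> c"
  by (simp add: square_free_iff_take_drop atLeastLessThan_upt atLeastAtMost_upt upt_rec)

lemma code_props:
  "t \<in> codes \<Longrightarrow> length t = 3 \<and> set t \<subseteq> {0, 1, 2} \<and> square_free t \<and> hd t \<noteq> 2 \<and> last t \<noteq> 2"
  unfolding codes_def by (auto simp: square_free_three)

lemma card_codes: "card codes = 4"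
  unfolding codes_def by simp

lemma code_eq_if_suffix:
  assumes "M \<in> codes" "P \<in> codes" "suffix A M" "suffix A P" "2 \<le> length A"
  shows "P = M"
proof -
  obtain M' P' where M: "M = M' @ A" and P: "P = P' @ A" using assms(3,4) by (auto simp: suffix_def)
  have "length M' + length A = 3" "length P' + length A = 3"
    using code_props[OF assms(1)] code_props[OF assms(2)] M P by auto
  then have "length P' = length M'" "length M' \<le> 1" using assms(5) by linarith+
  then have "drop 1 P = drop 1 M" unfolding M P by (simp add: drop_append)
  moreover have "inj_on (drop 1) codes" unfolding codes_def by (simp add: inj_on_def)
  ultimately show ?thesis using assms(1,2) by (meson inj_onD)
qed

lemma code_eq_if_prefix:
  assumes "M \<in> codes" "Q \<in> codes" "prefix C M" "prefix C Q" "2 \<le> length C"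
  shows "Q = M"
proof -
  obtain M' Q' where M: "M = C @ M'" and Q: "Q = C @ Q'" using assms(3,4) by (auto simp: prefix_def)
  have "length C \<le> 3" using assms(1) M code_props by fastforce
  with assms(5) have "take 2 Q = take 2 M" unfolding M Q by simp
  moreover have "inj_on (take 2) codes" unfolding codes_def by (simp add: inj_on_def)
  ultimately show ?thesis using assms(1,2) by (meson inj_onD)
qed

lemma token_props:
  "is_block t \<or> t \<in> codes \<Longrightarrow> t \<noteq> [] \<and> set t \<subseteq> {0, 1, 2} \<and> square_free t"
  unfolding is_block_def using code_props by fastforce

lemma token_kind_hd: "is_block t \<or> t \<in> codes \<Longrightarrow> t \<in> codes \<longleftrightarrow> hd t \<noteq> 2"
  unfolding is_block_def using code_props by fastforce

lemma token_kind_last: "is_block t \<or> t \<in> codes \<Longrightarrow> t \<in> codes \<longleftrightarrow> last t \<noteq> 2"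
  unfolding is_block_def using code_props by fastforce

lemma not_square_free_filter:
  "filter P ys \<noteq> [] \<Longrightarrow> \<not> square_free (filter P (xs @ ys @ ys @ zs))"
  unfolding square_free_def by auto

lemma successively_adjacent: "successively P (xs @ a # b # ys) \<Longrightarrow> P a b"
  by (simp add: successively_append_iff)

lemma not_square_free_codes_if_block_centre:
  assumes tokens: "\<forall>t\<in>set ts. is_block t \<or> t \<in> codes"
    and alt: "successively (\<lambda>s t. (s \<in> codes) \<noteq> (t \<in> codes)) ts"
    and ts: "ts = pre @ G @ [C @ A] @ G @ rest" and block: "C @ A \<notin> codes"
    and P: "pre \<noteq> []" "suffix A (last pre)"
    and Q: "C \<noteq> [] \<longrightarrow> rest \<noteq> [] \<and> prefix C (hd rest)"
  shows "\<not> square_free (filter (\<lambda>t. t \<in> codes) ts)"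
proof -
  have "G \<noteq> []"
  proof
    assume "G = []"
    show False
    proof (cases "A = []")
      case False
      from P \<open>G = []\<close> ts have ts': "ts = butlast pre @ last pre # (C @ A) # rest" by simp
      have "(last pre \<in> codes) \<noteq> (C @ A \<in> codes)"
        using successively_adjacent[OF alt[unfolded ts']] by simp
      moreover from P False have "last (last pre) = last (C @ A)" by (auto simp: suffix_def)
      moreover have "is_block t \<or> t \<in> codes" if "t \<in> {last pre, C @ A}" for t
        using tokens that unfolding ts' by auto
      ultimately show False using token_kind_last by (metis insertCI)
    next
      case True
      with block token_props tokens ts have "C \<noteq> []" by auto
      with Q \<open>G = []\<close> ts have ts': "ts = pre @ (C @ A) # hd rest # tl rest" by simp
      have "(C @ A \<in> codes) \<noteq> (hd rest \<in> codes)"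
        using successively_adjacent[OF alt[unfolded ts']] by simp
      moreover from Q \<open>C \<noteq> []\<close> have "hd (hd rest) = hd (C @ A)" by (auto simp: prefix_def)
      moreover have "is_block t \<or> t \<in> codes" if "t \<in> {hd rest, C @ A}" for t
        using tokens that unfolding ts' by auto
      ultimately show False using token_kind_hd by (metis insertCI)
    qed
  qed
  then have ts': "ts = (pre @ butlast G) @ last G # (C @ A) # G @ rest" using ts by simp
  have "last G \<in> codes" using successively_adjacent[OF alt[unfolded ts']] block by simp
  with \<open>G \<noteq> []\<close> have "filter (\<lambda>t. t \<in> codes) G \<noteq> []" by (metis filter_empty_conv last_in_set)
  moreover have "filter (\<lambda>t. t \<in> codes) ts = filter (\<lambda>t. t \<in> codes) pre @
      filter (\<lambda>t. t \<in> codes) G @ filter (\<lambda>t. t \<in> codes) G @ filter (\<lambda>t. t \<in> codes) rest"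
    using ts block by simp
  ultimately show ?thesis using not_square_free_filter by simp
qed

lemma not_square_free_codes_if_code_centre:
  assumes tokens: "\<forall>t\<in>set ts. is_block t \<or> t \<in> codes"
    and ts: "ts = pre @ G @ [C @ A] @ G @ rest" and code: "C @ A \<in> codes"
    and P: "pre \<noteq> []" "suffix A (last pre)"
    and Q: "C \<noteq> [] \<longrightarrow> rest \<noteq> [] \<and> prefix C (hd rest)"
  shows "\<not> square_free (filter (\<lambda>t. t \<in> codes) ts)"
proof (cases "2 \<le> length A")
  case True
  then have "A \<noteq> []" by auto
  with P have "last (last pre) = last (C @ A)" by (auto simp: suffix_def)
  moreover have "last pre \<in> set ts" using P ts by simp
  ultimately have "last pre \<in> codes" using tokens code token_kind_last by metis
  moreover have "suffix A (C @ A)" unfolding suffix_def by blast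
  ultimately have "last pre = C @ A" using code_eq_if_suffix[OF code _ _ P(2) True] by blast
  with P ts have "ts = butlast pre @ ((C @ A) # G) @ ((C @ A) # G) @ rest"
    by (metis append.assoc append_Cons append_Nil append_butlast_last_id)
  with code show ?thesis by (metis filter.simps(2) list.distinct(1) not_square_free_filter)
next
  case False
  with code code_props have "2 \<le> length C" by fastforce
  then have "C \<noteq> []" by auto
  with Q have "rest \<noteq> []" "prefix C (hd rest)" by auto
  then have "hd (hd rest) = hd (C @ A)" using \<open>C \<noteq> []\<close> by (auto simp: prefix_def)
  moreover have "hd rest \<in> set ts" using \<open>rest \<noteq> []\<close> ts by simp
  ultimately have "hd rest \<in> codes" using tokens code token_kind_hd by metis
  with code \<open>prefix C (hd rest)\<close> \<open>2 \<le> length C\<close> have "hd rest = C @ A"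
    by (intro code_eq_if_prefix) auto
  with \<open>rest \<noteq> []\<close> ts have "ts = pre @ (G @ [C @ A]) @ (G @ [C @ A]) @ tl rest"
    by (metis append.assoc append_Cons append_Nil list.collapse)
  with code show ?thesis by (metis filter_empty_conv in_set_conv_decomp not_square_free_filter)
qed

lemma square_free_join_tokens:
  assumes tokens: "\<forall>t\<in>set ts. is_block t \<or> t \<in> codes"
    and alt: "successively (\<lambda>s t. (s \<in> codes) \<noteq> (t \<in> codes)) ts"
    and codes_sf: "square_free (filter (\<lambda>t. t \<in> codes) ts)"
  shows "square_free (join_sep 3 ts)"
  unfolding square_free_def
proof (intro notI, elim exE conjE)
  fix u X v assume "X \<noteq> []" and sq: "join_sep 3 ts = u @ X @ X @ v"
  have sep_free: "3 \<notin> set (concat ts)" using tokens token_props by fastforce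
  show False
  proof (cases "3 \<in> set X")
    case False
    have "sublist (X @ X) (join_sep 3 ts)"
      unfolding sq using sublist_appendI[of "X @ X" u v] by simp
    with False \<open>X \<noteq> []\<close> obtain t where "t \<in> set ts" "sublist (X @ X) t"
      using sublist_join_sep[of 3 "X @ X" ts] by auto
    with tokens token_props \<open>X \<noteq> []\<close> show False unfolding square_free_iff_sublist by blast
  next
    case True
    then obtain pre G C A rest where decomp: "ts = pre @ G @ [C @ A] @ G @ rest" "pre \<noteq> []"
      "suffix A (last pre)" "C \<noteq> [] \<longrightarrow> rest \<noteq> [] \<and> prefix C (hd rest)"
      using square_across_sep[OF sep_free sq] by blast
    show False
    proof (cases "C @ A \<in> codes")
      case True
      from not_square_free_codes_if_code_centre[OF tokens decomp(1) True decomp(2-4)] codes_sf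
      show False by contradiction
    next
      case False
      from not_square_free_codes_if_block_centre[OF tokens alt decomp(1) False decomp(2-4)] codes_sf
      show False by contradiction
    qed
  qed
qed

section \<open>The construction\<close>

fun interleave :: "'a list \<Rightarrow> 'a list \<Rightarrow> 'a list" where
  "interleave (v # vs) (t # ts) = v # t # interleave vs ts"
| "interleave _ _ = []"

lemma length_interleave: "length vs = length ts \<Longrightarrow> length (interleave vs ts) = 2 * length ts"
  by (induction vs ts rule: interleave.induct) auto

lemma set_interleave: "length vs = length ts \<Longrightarrow> set (interleave vs ts) = set vs \<union> set ts"
  by (induction vs ts rule: interleave.induct) auto

lemma sum_list_map_interleave:
  fixes g :: "'a \<Rightarrow> 'b::comm_monoid_add"
  shows "length vs = length ts \<Longrightarrow>
    sum_list (map g (interleave vs ts)) = sum_list (map g vs) + sum_list (map g ts)"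
  by (induction vs ts rule: interleave.induct) (auto simp: add_ac)

lemma filter_interleave:
  "length vs = length ts \<Longrightarrow> \<forall>v\<in>set vs. \<not> P v \<Longrightarrow> \<forall>t\<in>set ts. P t \<Longrightarrow>
   filter P (interleave vs ts) = ts"
  by (induction vs ts rule: interleave.induct) auto

lemma successively_interleave:
  "length vs = length ts \<Longrightarrow> \<forall>v\<in>set vs. \<not> P v \<Longrightarrow> \<forall>t\<in>set ts. P t \<Longrightarrow>
   successively (\<lambda>a b. P a \<noteq> P b) (interleave vs ts)"
proof (induction vs ts rule: interleave.induct)
  case (1 v vs t ts)
  then show ?case by (cases vs; cases ts) auto
qed auto

lemma interleave_eq_imp_eq:
  "length vs = length ts \<Longrightarrow> length ws = length ts \<Longrightarrow> interleave vs ts = interleave ws ts \<Longrightarrow> vs = ws"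
proof (induction vs ts arbitrary: ws rule: interleave.induct)
  case (1 v vs t ts)
  then show ?case by (cases ws) auto
qed auto

lemma list_all2_interleave:
  "list_all2 R vs ws \<Longrightarrow> list_all2 R ts ts' \<Longrightarrow> list_all2 R (interleave vs ts) (interleave ws ts')"
proof (induction vs ts arbitrary: ws ts' rule: interleave.induct)
  case (1 v vs t ts)
  then show ?case by (cases ws; cases ts') auto
qed (auto simp: list_all2_Cons1 list_all2_Nil)

lemma rtranclp_square_reduction_join_sep:
  "list_all2 square_reduction\<^sup>*\<^sup>* ts ts' \<Longrightarrow> square_reduction\<^sup>*\<^sup>* (join_sep y ts) (join_sep y ts')"
proof (induction rule: list_all2_induct)
  case (Cons t ts t' ts')
  have "square_reduction\<^sup>*\<^sup>* ([] @ t @ y # join_sep y ts) ([] @ t' @ y # join_sep y ts)"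
    using Cons.hyps(1) by (rule rtranclp_square_reduction_context)
  moreover have
    "square_reduction\<^sup>*\<^sup>* ((t' @ [y]) @ join_sep y ts @ []) ((t' @ [y]) @ join_sep y ts' @ [])"
    using Cons.IH by (rule rtranclp_square_reduction_context)
  ultimately show ?case by simp
qed simp

lemma reduct_is_block:
  assumes "set U \<subseteq> {0, 1, 2}" "U \<noteq> []" "hd U = 2" "last U = 2" "V \<in> reducts U"
  shows "is_block V"
  using assms rtranclp_square_reduction_ends rtranclp_square_reduction_length_set
  unfolding reducts_def is_block_def by fastforce

lemma block_not_code: "is_block t \<Longrightarrow> t \<notin> codes"
  unfolding is_block_def using code_props by blast

lemma r_power_le_r_join:
  fixes U :: "nat list" and Ps Ts :: "nat list list"
  assumes U: "set U \<subseteq> {0, 1, 2}" "U \<noteq> []" "hd U = 2" "last U = 2"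
    and Ps: "\<forall>P\<in>set Ps. is_block P"
    and Ts: "set Ts \<subseteq> codes" "square_free Ts" "length Ts = m + length Ps"
  shows "r U ^ m \<le> r (join_sep 3 (interleave (replicate m U @ Ps) Ts))"
proof -
  define word where "word Vs = join_sep 3 (interleave (Vs @ Ps) Ts)" for Vs
  define Rm where "Rm = {Vs. set Vs \<subseteq> reducts U \<and> length Vs = m}"
  have len: "length (Vs @ Ps) = length Ts" if "Vs \<in> Rm" for Vs
    using that Ts(3) unfolding Rm_def by simp
  have blocks: "\<forall>V\<in>set (Vs @ Ps). is_block V" if "Vs \<in> Rm" for Vs
    using that Ps reduct_is_block[OF U] unfolding Rm_def by auto
  have tokens: "\<forall>t\<in>set (interleave (Vs @ Ps) Ts). is_block t \<or> t \<in> codes" if "Vs \<in> Rm" for Vs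
    using blocks[OF that] Ts(1) set_interleave[OF len[OF that]] by auto
  have sep_free: "interleave (Vs @ Ps) Ts \<in> {ts. 3 \<notin> set (concat ts)}" if "Vs \<in> Rm" for Vs
    using tokens[OF that] token_props by fastforce
  have inj: "inj_on word Rm"
  proof (rule inj_onI)
    fix Vs Ws assume Vs: "Vs \<in> Rm" and Ws: "Ws \<in> Rm" and "word Vs = word Ws"
    then have "interleave (Vs @ Ps) Ts = interleave (Ws @ Ps) Ts"
      unfolding word_def
      using inj_onD[OF inj_on_join_sep _ sep_free[OF Vs] sep_free[OF Ws]] by blast
    with interleave_eq_imp_eq[OF len[OF Vs] len[OF Ws]] show "Vs = Ws" by simp
  qed
  have img: "word ` Rm \<subseteq> reducts (word (replicate m U))"
  proof (rule image_subsetI)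
    fix Vs assume Vs: "Vs \<in> Rm"
    then have "list_all2 square_reduction\<^sup>*\<^sup>* (replicate m U) Vs"
      unfolding Rm_def reducts_def by (auto simp: list_all2_conv_all_nth dest: nth_mem)
    then have "list_all2 square_reduction\<^sup>*\<^sup>* (replicate m U @ Ps) (Vs @ Ps)"
      by (intro list_all2_appendI) (auto intro: list_all2_refl)
    then have "square_reduction\<^sup>*\<^sup>* (word (replicate m U)) (word Vs)"
      unfolding word_def
      by (intro rtranclp_square_reduction_join_sep list_all2_interleave)
        (auto intro: list_all2_refl)
    moreover have "square_free (word Vs)"
      unfolding word_def
    proof (rule square_free_join_tokens[OF tokens[OF Vs]])
      have blocks_not_codes: "\<forall>V\<in>set (Vs @ Ps). V \<notin> codes"
        using blocks[OF Vs] block_not_code by blast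
      have codes: "\<forall>t\<in>set Ts. t \<in> codes" using Ts(1) by blast
      show "successively (\<lambda>s t. (s \<in> codes) \<noteq> (t \<in> codes)) (interleave (Vs @ Ps) Ts)"
        by (rule successively_interleave[OF len[OF Vs] blocks_not_codes codes])
      show "square_free (filter (\<lambda>t. t \<in> codes) (interleave (Vs @ Ps) Ts))"
        unfolding filter_interleave[OF len[OF Vs] blocks_not_codes codes] by (rule Ts(2))
    qed
    ultimately show "word Vs \<in> reducts (word (replicate m U))" unfolding reducts_def by simp
  qed
  have "r U ^ m = card Rm"
    unfolding Rm_def r_def by (rule card_lists_length_eq[OF finite_reducts, symmetric])
  also have "\<dots> = card (word ` Rm)" by (rule card_image[OF inj, symmetric])
  also have "\<dots> \<le> r (word (replicate m U))"
    unfolding r_def by (rule card_mono[OF finite_reducts img])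
  finally show ?thesis unfolding word_def .
qed

lemma padding_blocks: "is_block [2, 0, 1, 0, 2]" "is_block [2, 0, 1, 2, 0, 2]"
  by (simp_all add: is_block_def square_free_iff_take_drop
      atLeastLessThan_upt atLeastAtMost_upt upt_rec)

lemma ten_eleven_combination: "90 \<le> (t::nat) \<Longrightarrow> \<exists>a b. t = 10 * a + 11 * b"
  by presburger

lemma length_join_interleave:
  "length vs = length ts \<Longrightarrow> length (join_sep y (interleave vs ts)) =
     sum_list (map length vs) + sum_list (map length ts) + 2 * length ts"
  by (simp add: length_join_sep sum_list_map_interleave length_interleave)

lemma r_power_le_f4:
  fixes U :: "nat list"
  assumes U: "set U \<subseteq> {0, 1, 2}" "U \<noteq> []" "hd U = 2" "last U = 2"
  shows "r U ^ (n div (length U + 5) - 15) \<le> f 4 n"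
proof (cases "15 \<le> n div (length U + 5)")
  case False
  then have "r U ^ (n div (length U + 5) - 15) = 1" by simp
  also have "\<dots> \<le> r (replicate n (0::nat))" by (rule r_pos)
  also have "\<dots> \<le> f 4 n" by (rule r_le_f) auto
  finally show ?thesis .
next
  case True
  define B where "B = length U + 5"
  define m where "m = n div B - 15"
  have "m + 15 = n div B" using True unfolding m_def B_def by simp
  then have "m * B + 15 * B \<le> n" by (metis add_mult_distrib div_times_less_eq_dividend)
  moreover have "6 \<le> B" using U(2) unfolding B_def by (cases U) auto
  ultimately have "90 \<le> n - m * B" by linarith
  then obtain a b where "n - m * B = 10 * a + 11 * b" using ten_eleven_combination by blast
  with \<open>m * B + 15 * B \<le> n\<close> have ab: "n = m * B + 10 * a + 11 * b" by linarith
  txt \<open>Each padding block contributes its length plus 5 letters (its code and two separators),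
    i.e. 10 or 11; these fill the remaining \<open>n - m B \<ge> 90\<close> letters exactly.\<close>
  define Ps where "Ps = replicate a [2, 0, 1, 0, 2] @ replicate b [2, 0, 1, 2, 0, 2 :: nat]"
  have Ps_blocks: "\<forall>P\<in>set Ps. is_block P" unfolding Ps_def using padding_blocks by auto
  have "finite codes" "4 \<le> card codes" using card_codes by (auto intro: card_ge_0_finite)
  then obtain Ts where Ts: "set Ts \<subseteq> codes" "length Ts = m + length Ps" "square_free Ts"
    using square_free_word_exists by blast
  define W where "W = join_sep 3 (interleave (replicate m U @ Ps) Ts)"
  have "sum_list (map length Ts) = 3 * length Ts"
    using Ts(1) code_props by (induction Ts) auto
  then have "length W = n"
    unfolding W_def using length_join_interleave[of "replicate m U @ Ps" Ts] Ts(2) ab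
    by (simp add: Ps_def B_def sum_list_replicate algebra_simps)
  moreover have "set W \<subseteq> {0..<4}"
  proof -
    have "set (concat (interleave (replicate m U @ Ps) Ts)) \<subseteq> {0, 1, 2}"
      using set_interleave[of "replicate m U @ Ps" Ts] Ts(1,2) U(1) Ps_blocks code_props
      unfolding is_block_def by fastforce
    then show ?thesis unfolding W_def using set_join_sep by fastforce
  qed
  ultimately have "r W \<le> f 4 n" by (rule r_le_f)
  moreover have "r U ^ m \<le> r W"
    unfolding W_def using r_power_le_r_join[OF U Ps_blocks Ts(1,3,2)] .
  ultimately show ?thesis unfolding m_def B_def by simp
qed

lemma powr_root_power_le_power_div:
  fixes x :: real and B k n :: nat
  assumes "1 \<le> x" "0 < B"
  shows "x powr (- real (k + 1)) * (x powr (1 / real B)) ^ n \<le> x ^ (n div B - k)"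
proof -
  have "real n = real (n div B) * real B + real (n mod B)"
    by (metis div_mult_mod_eq of_nat_add of_nat_mult)
  moreover have "real (n mod B) < real B" using assms(2) by simp
  ultimately have "real n / real B < real (n div B) + 1" using assms(2) by (simp add: field_simps)
  then have exponent: "real n / real B - real (k + 1) \<le> real (n div B - k)" by linarith
  have "x powr (- real (k + 1)) * (x powr (1 / real B)) ^ n =
      x powr (real n / real B - real (k + 1))"
    using assms(1) by (simp add: powr_power powr_add[symmetric] algebra_simps)
  also have "\<dots> \<le> x powr real (n div B - k)" using exponent assms(1) by (rule powr_mono)
  also have "\<dots> = x ^ (n div B - k)" using assms(1) by (simp add: powr_realpow)
  finally show ?thesis .
qed

theorem theorem2p9:
  fixes U :: "nat list"
  assumes "set U \<subseteq> {0, 1, 2}"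
    and "U \<noteq> []" and "hd U = 2" and "last U = 2"
  shows "\<exists>c > 0. \<forall>n. real (f 4 n) \<ge>
           c * (real (r U) powr (1 / (real (length U) + 5))) ^ n"
proof -
  let ?x = "real (r U)"
  have "1 \<le> ?x" using r_pos by simp
  have "?x powr (- 16) * (?x powr (1 / (real (length U) + 5))) ^ n \<le> real (f 4 n)" for n
  proof -
    have "?x powr (- real (15 + 1)) * (?x powr (1 / real (length U + 5))) ^ n \<le>
        ?x ^ (n div (length U + 5) - 15)"
      using \<open>1 \<le> ?x\<close> by (intro powr_root_power_le_power_div) auto
    also have "\<dots> \<le> real (f 4 n)"
      using r_power_le_f4[OF assms, of n] by (metis of_nat_le_iff of_nat_power)
    finally show ?thesis by (simp add: add.commute)
  qed
  moreover have "0 < ?x powr (- 16)" using \<open>1 \<le> ?x\<close> by simp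
  ultimately show ?thesis by blast
qed

end
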